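(* Let $X$ and $Y$ be nontrivial real Banach spaces. (a) If $X$ is weakly octahedral, then $X\oplus_1 Y$ is weakly octahedral. (b) If $X$ and $Y$ are weakly octahedral and $1<p\leq\infty$, then $X\oplus_p Y$ is weakly octahedral. (c) If $X\oplus_p Y$ is weakly octahedral, where $1<p\leq\infty$, then $X$ is weakly octahedral.
   Context: For $1\le p<\infty$, $X\oplus_p Y$ is $X\times Y$ with norm $(\|x\|^p+\|y\|^p)^{1/p}$; $X\oplus_\infty Y$ has norm $\max\{\|x\|,\|y\|\}$. A Banach space $Z$ is weakly octahedral if for every finite-dimensional subspace $E$ of $Z$, every $z^*\in B_{Z^*}$, and every $\varepsilon>0$, there is a $w\in S_Z$ (unit sphere) such that $\|z+w\|\geq(1-\varepsilon)(|z^*(z)|+\|w\|)$ for all $z\in E$. *)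

theory Defs
  imports "HOL-Analysis.Analysis"
begin

text \<open>The dual unit ball consists of the linear functionals f with |f z| \<le> N z
  (such functionals are automatically bounded, i.e. elements of the dual).
  Finite-dimensional subspaces are spans of finite sets.\<close>
definition weakly_octahedral_wrt :: "('v::real_vector \<Rightarrow> real) \<Rightarrow> bool" where
  "weakly_octahedral_wrt N \<longleftrightarrow>
     (\<forall>E f (\<epsilon>::real).
        subspace E \<and> (\<exists>F. finite F \<and> E = span F) \<and>
        linear f \<and> (\<forall>z. \<bar>f z\<bar> \<le> N z) \<and> \<epsilon> > 0 \<longrightarrow>
        (\<exists>w. N w = 1 \<and> (\<forall>z\<in>E. N (z + w) \<ge> (1 - \<epsilon>) * (\<bar>f z\<bar> + N w))))"

definition psum_norm :: "ereal \<Rightarrow> ('a::real_normed_vector \<times> 'b::real_normed_vector) \<Rightarrow> real" where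
  "psum_norm p z =
     (if p = \<infinity> then max (norm (fst z)) (norm (snd z))
      else (norm (fst z) powr real_of_ereal p + norm (snd z) powr real_of_ereal p)
             powr (1 / real_of_ereal p))"

end

theory Submission
  imports Defs
begin

text \<open>A functional \<open>f\<close> on \<open>X \<oplus>\<^sub>p Y\<close> splits as \<open>f (x, y) = g x + h y\<close>, and the pair of
  norms \<open>(\<parallel>g\<parallel>, \<parallel>h\<parallel>)\<close> lies in the dual unit ball of \<open>\<ell>\<^sub>p\<close> on \<open>\<real>\<^sup>2\<close>.

  (a) For \<open>p = 1\<close> a witness for \<open>X\<close> and \<open>g\<close>, put into the first coordinate, is a witness
  for the sum.

  (b) Take a nonnegative unit vector \<open>(\<alpha>, \<beta>)\<close> of \<open>\<ell>\<^sub>p\<close> almost norming \<open>(\<parallel>g\<parallel>, \<parallel>h\<parallel>)\<close> and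
  witnesses \<open>w\<^sub>1\<close>, \<open>w\<^sub>2\<close> for the normalised functionals \<open>g / \<parallel>g\<parallel>\<close>, \<open>h / \<parallel>h\<parallel>\<close>; then
  \<open>(\<alpha> w\<^sub>1, \<beta> w\<^sub>2)\<close> is a witness for the sum.

  (c) For \<open>p > 1\<close> the \<open>\<ell>\<^sub>p\<close> norm is flat near the axes: if \<open>\<parallel>(A, B)\<parallel>\<^sub>p \<ge> R \<ge> K B\<close>
  then \<open>A \<ge> R - \<rho> B\<close>. It suffices to treat a norm-one functional \<open>g\<close> on \<open>X\<close> (if \<open>g = 0\<close>,
  Hahn-Banach supplies one). Pick \<open>x\<^sub>0\<close> with \<open>g x\<^sub>0 \<approx> 1\<close> and apply weak octahedrality of the
  sum to \<open>(x, y) \<mapsto> g x\<close>. Testing its witness \<open>(u, v)\<close> at \<open>x \<plusminus> s x\<^sub>0\<close> for large \<open>s\<close> raises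
  \<open>|g|\<close> by about \<open>s\<close>, so by flatness the first coordinate \<open>x \<plusminus> s x\<^sub>0 + t u\<close> carries almost
  all of the norm; removing \<open>s x\<^sub>0\<close> again costs only \<open>s\<close>, and \<open>u / \<parallel>u\<parallel>\<close> is a witness
  for \<open>X\<close>.\<close>

section \<open>The \<open>\<ell>\<^sub>p\<close> norm on \<open>\<real>\<^sup>2\<close>\<close>

definition lp_norm2 :: "ereal \<Rightarrow> real \<Rightarrow> real \<Rightarrow> real" where
  "lp_norm2 p a b = (if p = \<infinity> then max a b
     else (a powr real_of_ereal p + b powr real_of_ereal p) powr (1 / real_of_ereal p))"

lemma psum_norm_eq_lp_norm2: "psum_norm p z = lp_norm2 p (norm (fst z)) (norm (snd z))"
  by (simp add: psum_norm_def lp_norm2_def)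

lemma ereal_ge_one_cases:
  assumes "1 \<le> p"
  obtains (infinite) "p = \<infinity>" | (finite) r where "p = ereal r" "1 \<le> r"
  using assms by (cases p) auto

lemma lp_norm2_commute: "lp_norm2 p a b = lp_norm2 p b a"
  by (simp add: lp_norm2_def max.commute add.commute)

lemma lp_norm2_ge_left:
  assumes "1 \<le> p" "0 \<le> a" "0 \<le> b"
  shows "a \<le> lp_norm2 p a b"
  using assms(1)
proof (cases rule: ereal_ge_one_cases)
  case (finite r)
  have "a = (a powr r) powr (1/r)"
    using finite assms by (simp add: powr_powr)
  also have "\<dots> \<le> (a powr r + b powr r) powr (1/r)"
    using finite assms by (intro powr_mono2) auto
  finally show ?thesis
    using finite by (simp add: lp_norm2_def)
qed (simp add: lp_norm2_def)

lemma lp_norm2_ge_right: "1 \<le> p \<Longrightarrow> 0 \<le> a \<Longrightarrow> 0 \<le> b \<Longrightarrow> b \<le> lp_norm2 p a b"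
  by (metis lp_norm2_commute lp_norm2_ge_left)

lemma lp_norm2_nonneg: "1 \<le> p \<Longrightarrow> 0 \<le> a \<Longrightarrow> 0 \<le> b \<Longrightarrow> 0 \<le> lp_norm2 p a b"
  using lp_norm2_ge_left order_trans by blast

lemma lp_norm2_zero_right:
  assumes "1 \<le> p" "0 \<le> a"
  shows "lp_norm2 p a 0 = a"
  using assms(1) by (cases rule: ereal_ge_one_cases) (use assms in \<open>auto simp: lp_norm2_def powr_powr\<close>)

lemma lp_norm2_zero_left: "1 \<le> p \<Longrightarrow> 0 \<le> b \<Longrightarrow> lp_norm2 p 0 b = b"
  by (metis lp_norm2_commute lp_norm2_zero_right)

lemma lp_norm2_one: "0 \<le> a \<Longrightarrow> 0 \<le> b \<Longrightarrow> lp_norm2 1 a b = a + b"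
  by (simp add: lp_norm2_def)

lemma lp_norm2_scale:
  assumes "1 \<le> p" "0 \<le> a" "0 \<le> b" "0 \<le> t"
  shows "lp_norm2 p (t * a) (t * b) = t * lp_norm2 p a b"
  using assms(1)
proof (cases rule: ereal_ge_one_cases)
  case (finite r)
  have "(t * a) powr r + (t * b) powr r = t powr r * (a powr r + b powr r)"
    by (simp add: powr_mult algebra_simps)
  then show ?thesis
    using finite assms by (simp add: lp_norm2_def powr_mult powr_powr)
qed (use assms in \<open>simp add: lp_norm2_def max_mult_distrib_left\<close>)

lemma lp_norm2_mono:
  assumes "1 \<le> p" "0 \<le> a" "0 \<le> b" "a \<le> a'" "b \<le> b'"
  shows "lp_norm2 p a b \<le> lp_norm2 p a' b'"
  using assms(1)
proof (cases rule: ereal_ge_one_cases)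
  case (finite r)
  then show ?thesis
    using assms by (simp add: lp_norm2_def) (intro powr_mono2 add_mono; simp)
qed (use assms in \<open>auto simp: lp_norm2_def le_max_iff_disj\<close>)

lemma lp_norm2_scaled_mono:
  assumes "1 \<le> p" "0 \<le> c" "0 \<le> a" "0 \<le> b" "c * a \<le> a'" "c * b \<le> b'"
  shows "c * lp_norm2 p a b \<le> lp_norm2 p a' b'"
  using lp_norm2_scale[of p a b c] lp_norm2_mono[of p "c * a" "c * b" a' b'] assms by simp

lemma powr_mean_almost_first:
  fixes r K A B R :: real
  assumes r: "1 < r" and K: "0 < K" and AB: "0 \<le> A" "0 \<le> B"
    and KB: "K * B \<le> R" and R: "R \<le> (A powr r + B powr r) powr (1/r)"
  shows "R - K powr (1 - r) * B \<le> A"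
proof (cases "R \<le> A")
  case True
  moreover have "0 \<le> K powr (1 - r) * B"
    using AB by simp
  ultimately show ?thesis by linarith
next
  case False
  then have R0: "0 < R" using AB by linarith
  have "R powr r \<le> ((A powr r + B powr r) powr (1/r)) powr r"
    using R R0 r by (intro powr_mono2) auto
  then have sum: "R powr r \<le> A powr r + B powr r"
    using r by (simp add: powr_powr)
  have "A powr r = A powr (r - 1) * A"
    using AB by (metis diff_add_cancel powr_add powr_one)
  also have "\<dots> \<le> R powr (r - 1) * A"
    using False AB r by (intro mult_right_mono powr_mono2) auto
  finally have A: "A powr r \<le> R powr (r - 1) * A" .
  have "B powr r = B powr (r - 1) * B"
    using AB by (metis diff_add_cancel powr_add powr_one)
  also have "\<dots> \<le> (R / K) powr (r - 1) * B"
    using KB K AB r by (intro mult_right_mono powr_mono2) (auto simp: field_simps)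
  also have "(R / K) powr (r - 1) = R powr (r - 1) * K powr (1 - r)"
    by (metis divide_inverse minus_diff_eq powr_divide powr_minus)
  finally have B: "B powr r \<le> R powr (r - 1) * (K powr (1 - r) * B)"
    by (simp add: mult.assoc)
  have "R powr r = R powr (r - 1) * R"
    using R0 by (metis diff_add_cancel powr_add powr_one less_imp_le)
  then have "R powr (r - 1) * (R - A) \<le> R powr (r - 1) * (K powr (1 - r) * B)"
    using sum A B by (simp add: algebra_simps)
  then show ?thesis
    using R0 by (simp add: mult_le_cancel_left_pos)
qed

lemma lp_norm2_almost_first:
  assumes p: "1 < p" and \<rho>: "0 < \<rho>"
  obtains K where "0 < K"
    "\<And>A B R. 0 \<le> A \<Longrightarrow> 0 \<le> B \<Longrightarrow> K * B \<le> R \<Longrightarrow> R \<le> lp_norm2 p A B \<Longrightarrow> R - \<rho> * B \<le> A"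
proof -
  have "1 \<le> p" using p by simp
  then show thesis
  proof (cases rule: ereal_ge_one_cases)
    case infinite
    show thesis
    proof (rule that[of 2])
      fix A B R :: real
      assume AB: "0 \<le> A" "0 \<le> B" and "2 * B \<le> R" "R \<le> lp_norm2 p A B"
      then have "R \<le> A"
        using infinite by (auto simp: lp_norm2_def)
      then show "R - \<rho> * B \<le> A"
        using \<rho> AB mult_nonneg_nonneg[of \<rho> B] by linarith
    qed simp
  next
    case (finite r)
    then have r: "1 < r" using p by simp
    define K where "K = \<rho> powr (1 / (1 - r))"
    have "K powr (1 - r) = \<rho>"
      using r \<rho> by (simp add: K_def powr_powr)
    then show thesis
      using powr_mean_almost_first[OF r, of K] finite \<rho>
      by (intro that[of K]) (auto simp: K_def lp_norm2_def)
  qed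
qed

lemma lp_norm2_dual_sup:
  assumes p: "1 \<le> p"
    and dual: "\<And>a b. 0 \<le> a \<Longrightarrow> 0 \<le> b \<Longrightarrow> G * a + H * b \<le> lp_norm2 p a b"
  obtains c where "G \<le> c" "H \<le> c" "c \<le> 1"
    "\<And>A B. 0 \<le> A \<Longrightarrow> 0 \<le> B \<Longrightarrow> G * A + H * B \<le> c * lp_norm2 p A B"
    "\<And>\<eta>. 0 < \<eta> \<Longrightarrow> \<exists>\<alpha> \<beta>. 0 \<le> \<alpha> \<and> 0 \<le> \<beta> \<and> lp_norm2 p \<alpha> \<beta> = 1 \<and> c - \<eta> < G * \<alpha> + H * \<beta>"
proof
  define U where "U = {(a, b). 0 \<le> a \<and> 0 \<le> b \<and> lp_norm2 p a b = 1}"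
  define c where "c = (SUP (a, b)\<in>U. G * a + H * b)"
  have U10: "(1, 0) \<in> U" "(0, 1) \<in> U"
    using p by (simp_all add: U_def lp_norm2_zero_right lp_norm2_zero_left)
  have bdd: "bdd_above ((\<lambda>(a, b). G * a + H * b) ` U)"
    using dual by (force simp: U_def bdd_above_def)
  show "G \<le> c" "H \<le> c"
    using cSUP_upper[OF U10(1) bdd] cSUP_upper[OF U10(2) bdd] by (simp_all add: c_def)
  show "c \<le> 1"
    unfolding c_def
  proof (rule cSUP_least)
    show "U \<noteq> {}" using U10 by blast
    show "(\<lambda>(a, b). G * a + H * b) u \<le> 1" if "u \<in> U" for u
      using that dual[of "fst u" "snd u"] by (auto simp: U_def)
  qed
  show "G * A + H * B \<le> c * lp_norm2 p A B" if AB: "0 \<le> A" "0 \<le> B" for A B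
  proof (cases "lp_norm2 p A B = 0")
    case True
    then have "A = 0" "B = 0"
      using lp_norm2_ge_left[OF p AB] lp_norm2_ge_right[OF p AB] AB by auto
    then show ?thesis using True by simp
  next
    case False
    define s where "s = lp_norm2 p A B"
    have s: "0 < s"
      using False lp_norm2_nonneg[OF p AB] by (simp add: s_def)
    have "lp_norm2 p (A / s) (B / s) = 1"
      using lp_norm2_scale[OF p AB, of "1 / s"] s by (simp add: s_def)
    then have "(A / s, B / s) \<in> U"
      using AB s by (simp add: U_def)
    then have "G * (A / s) + H * (B / s) \<le> c"
      using cSUP_upper[OF _ bdd] by (fastforce simp: c_def)
    then show ?thesis
      using s by (simp add: s_def field_simps)
  qed
  show "\<exists>\<alpha> \<beta>. 0 \<le> \<alpha> \<and> 0 \<le> \<beta> \<and> lp_norm2 p \<alpha> \<beta> = 1 \<and> c - \<eta> < G * \<alpha> + H * \<beta>"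
    if "0 < \<eta>" for \<eta>
  proof -
    have "c - \<eta> < (SUP (a, b)\<in>U. G * a + H * b)"
      using that by (simp add: c_def)
    then show ?thesis
      using less_cSUP_iff[OF _ bdd] U10 by (fastforce simp: U_def)
  qed
qed

lemma lp_norm2_almost_norming:
  assumes p: "1 \<le> p" and G: "0 \<le> G" and H: "0 \<le> H"
    and dual: "\<And>a b. 0 \<le> a \<Longrightarrow> 0 \<le> b \<Longrightarrow> G * a + H * b \<le> lp_norm2 p a b"
    and \<eta>: "0 < \<eta>"
  obtains \<alpha> \<beta> where "0 \<le> \<alpha>" "0 \<le> \<beta>" "lp_norm2 p \<alpha> \<beta> = 1"
    "\<And>A B. 0 \<le> A \<Longrightarrow> 0 \<le> B \<Longrightarrow>
       (1 - \<eta>) * (G * A + H * B + 1) \<le> lp_norm2 p (A + \<alpha>) (B + \<beta>)"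
proof -
  obtain c where c: "G \<le> c" "H \<le> c" "c \<le> 1"
    and homogeneous: "\<And>A B. 0 \<le> A \<Longrightarrow> 0 \<le> B \<Longrightarrow> G * A + H * B \<le> c * lp_norm2 p A B"
    and near: "\<And>\<eta>. 0 < \<eta> \<Longrightarrow>
      \<exists>\<alpha> \<beta>. 0 \<le> \<alpha> \<and> 0 \<le> \<beta> \<and> lp_norm2 p \<alpha> \<beta> = 1 \<and> c - \<eta> < G * \<alpha> + H * \<beta>"
    using lp_norm2_dual_sup[OF p dual] by blast
  show thesis
  proof (cases "c = 0")
    case True
    with c G H have "G = 0" "H = 0" by auto
    show thesis
    proof (rule that[of 1 0])
      fix A B :: real
      assume AB: "0 \<le> A" "0 \<le> B"
      have "A + 1 \<le> lp_norm2 p (A + 1) (B + 0)"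
        using lp_norm2_ge_left[OF p] AB by simp
      then show "(1 - \<eta>) * (G * A + H * B + 1) \<le> lp_norm2 p (A + 1) (B + 0)"
        using \<open>G = 0\<close> \<open>H = 0\<close> \<eta> AB by simp
    qed (use p in \<open>auto simp: lp_norm2_zero_right\<close>)
  next
    case False
    then have c0: "0 < c" using G c(1) by linarith
    then obtain \<alpha> \<beta> where \<alpha>\<beta>: "0 \<le> \<alpha>" "0 \<le> \<beta>" "lp_norm2 p \<alpha> \<beta> = 1"
      and close: "c - c * \<eta> < G * \<alpha> + H * \<beta>"
      using near[of "c * \<eta>"] \<eta> by auto
    show thesis
    proof (rule that[OF \<alpha>\<beta>])
      fix A B :: real
      assume AB: "0 \<le> A" "0 \<le> B"
      have "G * (A + \<alpha>) + H * (B + \<beta>) \<le> c * lp_norm2 p (A + \<alpha>) (B + \<beta>)"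
        using homogeneous \<alpha>\<beta> AB by simp
      moreover have "c * (G * A + H * B) \<le> G * A + H * B"
        using c c0 AB G H by (intro mult_left_le_one_le) auto
      ultimately have "c * (G * A + H * B + 1 - \<eta>) < c * lp_norm2 p (A + \<alpha>) (B + \<beta>)"
        using close by (simp add: algebra_simps)
      then have "G * A + H * B + 1 - \<eta> < lp_norm2 p (A + \<alpha>) (B + \<beta>)"
        using c0 by simp
      moreover have "(1 - \<eta>) * (G * A + H * B + 1) \<le> G * A + H * B + 1 - \<eta>"
        using \<eta> AB G H by (simp add: algebra_simps)
      ultimately show "(1 - \<eta>) * (G * A + H * B + 1) \<le> lp_norm2 p (A + \<alpha>) (B + \<beta>)"
        by linarith
    qed
  qed
qed

section \<open>Hahn-Banach for sublinear functionals\<close>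

definition sublinear :: "('v::real_vector \<Rightarrow> real) \<Rightarrow> bool" where
  "sublinear q \<longleftrightarrow> (\<forall>x y. q (x + y) \<le> q x + q y) \<and> (\<forall>c x. 0 \<le> c \<longrightarrow> q (c *\<^sub>R x) = c * q x)"

lemma sublinear_norm: "sublinear norm"
  by (simp add: sublinear_def norm_triangle_ineq)

text \<open>The graph of a linear functional defined on a subspace and dominated by \<open>q\<close>; for a
  subspace of \<open>'v \<times> real\<close>, single-valuedness reduces to the condition at \<open>0\<close>.\<close>
definition dominated_graph :: "('v::real_vector \<Rightarrow> real) \<Rightarrow> ('v \<times> real) set \<Rightarrow> bool" where
  "dominated_graph q S \<longleftrightarrow> subspace S \<and> (\<forall>a. (0, a) \<in> S \<longrightarrow> a = 0) \<and> (\<forall>(x, a) \<in> S. a \<le> q x)"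

lemma dominated_graph_unique:
  assumes "dominated_graph q S" "(x, a) \<in> S" "(x, b) \<in> S"
  shows "a = b"
proof -
  have "(x, a) - (x, b) \<in> S"
    using assms by (intro subspace_diff) (auto simp: dominated_graph_def)
  then show ?thesis
    using assms(1) by (auto simp: dominated_graph_def)
qed

lemma dominated_graph_Union_chain:
  assumes "C \<noteq> {}" "subset.chain {S. dominated_graph q S} C"
  shows "dominated_graph q (\<Union>C)"
proof -
  have graphs: "\<And>S. S \<in> C \<Longrightarrow> dominated_graph q S"
    and chain: "\<And>S T. S \<in> C \<Longrightarrow> T \<in> C \<Longrightarrow> S \<subseteq> T \<or> T \<subseteq> S"
    using assms(2) by (auto simp: subset.chain_def)
  have subspaces: "\<And>S. S \<in> C \<Longrightarrow> subspace S"
    using graphs by (simp add: dominated_graph_def)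
  have "subspace (\<Union>C)"
    unfolding subspace_def
  proof (intro conjI ballI allI)
    show "0 \<in> \<Union>C"
      using assms(1) subspaces subspace_0 by blast
    show "x + y \<in> \<Union>C" if xy: "x \<in> \<Union>C" "y \<in> \<Union>C" for x y
    proof -
      obtain S T where "S \<in> C" "T \<in> C" "x \<in> S" "y \<in> T"
        using xy by blast
      then show ?thesis
        using chain[of S T] subspaces[of S] subspaces[of T] subspace_add by blast
    qed
    show "c *\<^sub>R x \<in> \<Union>C" if "x \<in> \<Union>C" for c x
      using that subspaces subspace_scale by blast
  qed
  then show ?thesis
    using graphs by (fastforce simp: dominated_graph_def)
qed
lemma sublinearD:
  assumes "sublinear q"
  shows "q (u + v) \<le> q u + q v" "0 \<le> t \<Longrightarrow> q (t *\<^sub>R u) = t * q u"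
  using assms by (auto simp: sublinear_def)

lemma dominated_graph_scale: "dominated_graph q S \<Longrightarrow> (m, a) \<in> S \<Longrightarrow> (t *\<^sub>R m, t * a) \<in> S"
  unfolding dominated_graph_def using subspace_scale by fastforce

lemma dominated_graph_extension_value:
  assumes q: "sublinear q" and S: "dominated_graph q S"
  obtains c where "\<And>m a. (m, a) \<in> S \<Longrightarrow> a - q (m - x) \<le> c"
    "\<And>m a. (m, a) \<in> S \<Longrightarrow> c \<le> q (m + x) - a"
proof
  have sub: "subspace S" and dom: "\<And>m a. (m, a) \<in> S \<Longrightarrow> a \<le> q m"
    using S by (auto simp: dominated_graph_def)
  have gap: "a - q (m - x) \<le> q (m' + x) - a'" if "(m, a) \<in> S" "(m', a') \<in> S" for m a m' a'
  proof -
    have "a + a' \<le> q (m + m')"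
      using dom subspace_add[OF sub that] by simp
    also have "\<dots> \<le> q (m - x) + q (m' + x)"
      using sublinearD(1)[OF q, of "m - x" "m' + x"] by simp
    finally show ?thesis by simp
  qed
  have S00: "(0, 0) \<in> S"
    using subspace_0[OF sub] by (simp add: zero_prod_def)
  define c where "c = (SUP (m, a)\<in>S. a - q (m - x))"
  have bdd: "bdd_above ((\<lambda>(m, a). a - q (m - x)) ` S)"
    using gap[OF _ S00] by (intro bdd_aboveI[of _ "q x"]) auto
  show "a - q (m - x) \<le> c" if "(m, a) \<in> S" for m a
    using cSUP_upper[OF that bdd] by (simp add: c_def)
  show "c \<le> q (m + x) - a" if "(m, a) \<in> S" for m a
    unfolding c_def using S00 gap[OF _ that] by (intro cSUP_least) auto
qed

lemma dominated_graph_extension_bound: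
  assumes q: "sublinear q" and S: "dominated_graph q S"
    and c_ge: "\<And>m a. (m, a) \<in> S \<Longrightarrow> a - q (m - x) \<le> c"
    and c_le: "\<And>m a. (m, a) \<in> S \<Longrightarrow> c \<le> q (m + x) - a"
    and ma: "(m, a) \<in> S"
  shows "a + t * c \<le> q (m + t *\<^sub>R x)"
proof -
  consider "t = 0" | "0 < t" | "t < 0" by linarith
  then show ?thesis
  proof cases
    case 1
    then show ?thesis using S ma by (auto simp: dominated_graph_def)
  next
    case 2
    have "c \<le> q ((1 / t) *\<^sub>R m + x) - (1 / t) * a"
      using c_le[OF dominated_graph_scale[OF S ma]] .
    also have "(1 / t) *\<^sub>R m + x = (1 / t) *\<^sub>R (m + t *\<^sub>R x)"
      using 2 by (simp add: algebra_simps)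
    also have "q ((1 / t) *\<^sub>R (m + t *\<^sub>R x)) = q (m + t *\<^sub>R x) / t"
      using 2 sublinearD(2)[OF q, of "1 / t"] by simp
    finally show ?thesis
      using 2 by (simp add: field_simps)
  next
    case 3
    have "(-1 / t) * a - q ((-1 / t) *\<^sub>R m - x) \<le> c"
      using c_ge[OF dominated_graph_scale[OF S ma]] .
    also have "(-1 / t) *\<^sub>R m - x = (-1 / t) *\<^sub>R (m + t *\<^sub>R x)"
      using 3 by (simp add: algebra_simps)
    also have "q ((-1 / t) *\<^sub>R (m + t *\<^sub>R x)) = q (m + t *\<^sub>R x) / - t"
      using 3 sublinearD(2)[OF q, of "-1 / t"] by simp
    finally show ?thesis
      using 3 by (simp add: field_simps)
  qed
qed

lemma dominated_graph_extend:
  assumes q: "sublinear q" and S: "dominated_graph q S" and x: "\<forall>a. (x, a) \<notin> S"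
  obtains c where "dominated_graph q (span (insert (x, c) S))"
proof -
  obtain c where c_ge: "\<And>m a. (m, a) \<in> S \<Longrightarrow> a - q (m - x) \<le> c"
    and c_le: "\<And>m a. (m, a) \<in> S \<Longrightarrow> c \<le> q (m + x) - a"
    using dominated_graph_extension_value[OF q S] by blast
  have sub: "subspace S"
    using S by (simp add: dominated_graph_def)
  define S' where "S' = span (insert (x, c) S)"
  have S'_iff: "(y, b) \<in> S' \<longleftrightarrow> (\<exists>t. (y - t *\<^sub>R x, b - t * c) \<in> S)" for y b
    unfolding S'_def span_insert span_eq_iff[THEN iffD2, OF sub] by simp
  have "b \<le> q y" if yb: "(y, b) \<in> S'" for y b
  proof -
    obtain t where "(y - t *\<^sub>R x, b - t * c) \<in> S"
      using S'_iff[of y b] yb by blast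
    from dominated_graph_extension_bound[OF q S c_ge c_le this, of t] show ?thesis
      by simp
  qed
  moreover have "b = 0" if b: "(0, b) \<in> S'" for b
  proof -
    obtain t where t: "(- t *\<^sub>R x, b - t * c) \<in> S"
      using S'_iff[of 0 b] b by auto
    have "t = 0"
    proof (rule ccontr)
      assume "t \<noteq> 0"
      then have "(x, (b - t * c) / - t) \<in> S"
        using dominated_graph_scale[OF S t, of "-1 / t"] by simp
      then show False using x by blast
    qed
    then show ?thesis
      using t S by (simp add: dominated_graph_def)
  qed
  ultimately have "dominated_graph q S'"
    by (auto simp: dominated_graph_def S'_def)
  then show thesis
    using that S'_def by blast
qed

lemma dominated_graph_line:
  assumes q: "sublinear q"
  shows "dominated_graph q (span {(x, q x)})"
proof -
  note q_add = sublinearD(1)[OF q] and q_scale = sublinearD(2)[OF q]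
  have q0: "q 0 = 0"
    using q_scale[of 0 0] by simp
  have "t * q x \<le> q (t *\<^sub>R x)" for t
  proof (cases "0 \<le> t")
    case False
    have "0 \<le> q x + q (- x)"
      using q_add[of x "- x"] q0 by simp
    then have "t * q x \<le> - t * q (- x)"
      using False mult_left_mono_neg[of "- q (- x)" "q x" t] by simp
    then show ?thesis
      using False q_scale[of "- t" "- x"] by simp
  qed (simp add: q_scale)
  moreover have "t * q x = 0" if "t *\<^sub>R x = 0" for t
    using that q0 by auto
  ultimately show ?thesis
    using subspace_span[of "{(x, q x)}"] by (auto simp: dominated_graph_def span_singleton)
qed

theorem sublinear_hahn_banach:
  assumes q: "sublinear q"
  obtains \<phi> where "linear \<phi>" "\<And>x. \<phi> x \<le> q x" "\<phi> x0 = q x0"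
proof -
  define S0 where "S0 = span {(x0, q x0)}"
  define \<G> where "\<G> = {S. dominated_graph q S \<and> S0 \<subseteq> S}"
  have "S0 \<in> \<G>"
    using dominated_graph_line[OF q] by (simp add: \<G>_def S0_def)
  moreover have "\<Union>\<C> \<in> \<G>" if "\<C> \<noteq> {}" "subset.chain \<G> \<C>" for \<C>
    using that dominated_graph_Union_chain[of \<C> q]
    by (auto simp: \<G>_def subset.chain_def)
  ultimately obtain M where M: "dominated_graph q M" "S0 \<subseteq> M"
    and maximal: "\<And>S. S \<in> \<G> \<Longrightarrow> M \<subseteq> S \<Longrightarrow> S = M"
    using subset_Zorn_nonempty[of \<G>] by (auto simp: \<G>_def)
  have total: "\<exists>a. (x, a) \<in> M" for x
  proof (rule ccontr)
    assume "\<nexists>a. (x, a) \<in> M"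
    then obtain c where "dominated_graph q (span (insert (x, c) M))"
      using dominated_graph_extend[OF q M(1)] by blast
    moreover have "M \<subseteq> span (insert (x, c) M)" "(x, c) \<in> span (insert (x, c) M)"
      by (auto intro: span_base)
    ultimately show False
      using maximal[of "span (insert (x, c) M)"] M(2) \<open>\<nexists>a. (x, a) \<in> M\<close> by (auto simp: \<G>_def)
  qed
  define \<phi> where "\<phi> x = (THE a. (x, a) \<in> M)" for x
  have \<phi>_eq: "\<phi> x = a" if "(x, a) \<in> M" for x a
    unfolding \<phi>_def using that dominated_graph_unique[OF M(1)] by blast
  have \<phi>_graph: "(x, \<phi> x) \<in> M" for x
    using total[of x] \<phi>_eq by metis
  have sub: "subspace M"
    using M(1) by (simp add: dominated_graph_def)
  show thesis
  proof
    show "linear \<phi>"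
    proof (rule linearI)
      show "\<phi> (x + y) = \<phi> x + \<phi> y" for x y
        using subspace_add[OF sub \<phi>_graph \<phi>_graph] \<phi>_eq by simp
      show "\<phi> (r *\<^sub>R x) = r *\<^sub>R \<phi> x" for r x
        using subspace_scale[OF sub \<phi>_graph] \<phi>_eq by simp
    qed
    show "\<phi> x \<le> q x" for x
      using M(1) \<phi>_graph[of x] unfolding dominated_graph_def by fast
    show "\<phi> x0 = q x0"
      using M(2) \<phi>_eq by (auto simp: S0_def intro: span_base)
  qed
qed

corollary exists_norming_functional:
  fixes x0 :: "'a::real_normed_vector"
  obtains \<phi> where "linear \<phi>" "\<And>x. \<bar>\<phi> x\<bar> \<le> norm x" "\<phi> x0 = norm x0"
proof -
  obtain \<phi> where \<phi>: "linear \<phi>" "\<And>x. \<phi> x \<le> norm x" "\<phi> x0 = norm x0"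
    using sublinear_hahn_banach[OF sublinear_norm] by blast
  have "\<bar>\<phi> x\<bar> \<le> norm x" for x
    using \<phi>(2)[of x] \<phi>(2)[of "- x"] linear_neg[OF \<phi>(1), of x] by simp
  then show thesis
    using that \<phi> by blast
qed

section \<open>Functionals dominated by the norm\<close>

lemma bounded_linear_if_norm_dominated:
  fixes g :: "'a::real_normed_vector \<Rightarrow> real"
  assumes "linear g" "\<And>x. \<bar>g x\<bar> \<le> norm x"
  shows "bounded_linear g"
  using assms by (intro bounded_linear_intro[where K = 1]) (auto simp: linear_add linear_scale)

lemma onorm_almost_attained:
  fixes g :: "'a::real_normed_vector \<Rightarrow> real"
  assumes g: "bounded_linear g" and nontrivial: "\<exists>x::'a. x \<noteq> 0" and \<eta>: "0 < \<eta>"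
  obtains x where "norm x = 1" "onorm g - \<eta> < g x"
proof -
  have bdd: "bdd_above (range (\<lambda>x. norm (g x) / norm x))"
    using le_onorm[OF g] by (intro bdd_aboveI) auto
  have "onorm g - \<eta> < (SUP x. norm (g x) / norm x)"
    using \<eta> by (simp add: onorm_def)
  then obtain y where y: "onorm g - \<eta> < \<bar>g y\<bar> / norm y"
    using less_cSUP_iff[OF _ bdd] by auto
  obtain u where u: "norm u = 1" "onorm g - \<eta> < \<bar>g u\<bar>"
  proof (cases "y = 0")
    case True
    obtain x0 :: 'a where "x0 \<noteq> 0" using nontrivial by blast
    then show thesis
      using y True by (intro that[of "x0 /\<^sub>R norm x0"]) auto
  next
    case False
    have "\<bar>g (y /\<^sub>R norm y)\<bar> = \<bar>g y\<bar> / norm y"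
      using linear_scale[OF bounded_linear.linear[OF g]] by (simp add: abs_mult divide_inverse_commute)
    then show thesis
      using y False by (intro that[of "y /\<^sub>R norm y"]) auto
  qed
  show thesis
  proof (cases "0 \<le> g u")
    case True
    then show thesis using u that by simp
  next
    case False
    then show thesis
      using u that[of "- u"] linear_neg[OF bounded_linear.linear[OF g]] by simp
  qed
qed

text \<open>If \<open>onorm g = 0\<close> then \<open>g = 0\<close>, and division by zero makes the normalised functional \<open>0\<close>
  as well, so no case distinction is needed.\<close>

lemma normalize_functional:
  fixes g :: "'a::real_normed_vector \<Rightarrow> real"
  assumes g: "linear g" "\<And>x. \<bar>g x\<bar> \<le> norm x"
  shows "onorm g \<le> 1" "linear (\<lambda>x. g x / onorm g)" "\<bar>g x / onorm g\<bar> \<le> norm x"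
    "\<bar>g x\<bar> = onorm g * \<bar>g x / onorm g\<bar>"
proof -
  have bl: "bounded_linear g"
    using bounded_linear_if_norm_dominated[OF g] .
  show "onorm g \<le> 1"
    using g(2) by (intro onorm_bound) auto
  show "linear (\<lambda>x. g x / onorm g)"
    using g(1) by (intro linearI) (auto simp: linear_add linear_scale add_divide_distrib)
  have bound: "\<bar>g x\<bar> \<le> onorm g * norm x"
    using onorm[OF bl, of x] by simp
  show "\<bar>g x / onorm g\<bar> \<le> norm x"
    using bound onorm_pos_le[OF bl] by (cases "onorm g = 0") (auto simp: field_simps)
  show "\<bar>g x\<bar> = onorm g * \<bar>g x / onorm g\<bar>"
    using bound onorm_pos_le[OF bl] by (cases "onorm g = 0") auto
qed

lemma exists_norm_one_majorant:
  fixes f :: "'a::real_normed_vector \<Rightarrow> real"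
  assumes nontrivial: "\<exists>x::'a. x \<noteq> 0" and f: "linear f" "\<And>x. \<bar>f x\<bar> \<le> norm x"
  obtains g where "linear g" "\<And>x. \<bar>g x\<bar> \<le> norm x"
    "\<And>\<eta>. 0 < \<eta> \<Longrightarrow> \<exists>x. norm x = 1 \<and> 1 - \<eta> < g x" "\<And>x. \<bar>f x\<bar> \<le> \<bar>g x\<bar>"
proof (cases "onorm f = 0")
  case True
  obtain x0 :: 'a where x0: "x0 \<noteq> 0" using nontrivial by blast
  obtain \<phi> where \<phi>: "linear \<phi>" "\<And>x. \<bar>\<phi> x\<bar> \<le> norm x" "\<phi> x0 = norm x0"
    using exists_norming_functional by blast
  have "\<phi> (x0 /\<^sub>R norm x0) = 1"
    using \<phi>(3) x0 linear_scale[OF \<phi>(1)] by simp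
  moreover have "f x = 0" for x
    using True onorm_eq_0[OF bounded_linear_if_norm_dominated[OF f]] by blast
  ultimately show thesis
    using x0 \<phi> by (intro that[of \<phi>]) (auto intro!: exI[of _ "x0 /\<^sub>R norm x0"])
next
  case False
  have bl: "bounded_linear f"
    using bounded_linear_if_norm_dominated[OF f] .
  then have G: "0 < onorm f"
    using False onorm_pos_le by (simp add: order_less_le)
  note n = normalize_functional[OF f]
  show thesis
  proof (rule that[OF n(2,3)])
    fix \<eta> :: real
    assume "0 < \<eta>"
    then obtain x where "norm x = 1" "onorm f - onorm f * \<eta> < f x"
      using onorm_almost_attained[OF bl nontrivial, of "onorm f * \<eta>"] G by auto
    then show "\<exists>x. norm x = 1 \<and> 1 - \<eta> < f x / onorm f"
      using G by (auto simp: field_simps)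
  next
    show "\<bar>f x\<bar> \<le> \<bar>f x / onorm f\<bar>" for x
      using n(4)[of x] n(1) G mult_left_le_one_le[of "\<bar>f x / onorm f\<bar>" "onorm f"] by simp
  qed
qed

section \<open>Weak octahedrality\<close>

lemma weakly_octahedral_wrtI:
  fixes N :: "'v::real_vector \<Rightarrow> real"
  assumes "\<And>F f \<epsilon>. finite F \<Longrightarrow> linear f \<Longrightarrow> \<forall>z. \<bar>f z\<bar> \<le> N z \<Longrightarrow> 0 < \<epsilon> \<Longrightarrow> \<epsilon> < 1 \<Longrightarrow>
     \<exists>w. N w = 1 \<and> (\<forall>z\<in>span F. (1 - \<epsilon>) * (\<bar>f z\<bar> + N w) \<le> N (z + w))"
  shows "weakly_octahedral_wrt N"
  unfolding weakly_octahedral_wrt_def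
proof (intro allI impI)
  fix E :: "'v set" and f and \<epsilon> :: real
  assume "subspace E \<and> (\<exists>F. finite F \<and> E = span F) \<and> linear f \<and> (\<forall>z. \<bar>f z\<bar> \<le> N z) \<and> 0 < \<epsilon>"
  then obtain F where F: "finite F" "E = span F" and f: "linear f" "\<forall>z. \<bar>f z\<bar> \<le> N z"
    and \<epsilon>: "0 < \<epsilon>"
    by blast
  have "0 < min \<epsilon> (1/2)" "min \<epsilon> (1/2) < 1"
    using \<epsilon> by auto
  then obtain w where w: "N w = 1" "\<forall>z\<in>span F. (1 - min \<epsilon> (1/2)) * (\<bar>f z\<bar> + N w) \<le> N (z + w)"
    using assms[OF F(1) f] by blast
  have "(1 - \<epsilon>) * (\<bar>f z\<bar> + N w) \<le> (1 - min \<epsilon> (1/2)) * (\<bar>f z\<bar> + N w)" for z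
    using w(1) by (intro mult_right_mono) auto
  then show "\<exists>w. N w = 1 \<and> (\<forall>z\<in>E. (1 - \<epsilon>) * (\<bar>f z\<bar> + N w) \<le> N (z + w))"
    using w F(2) order_trans by blast
qed

lemma weakly_octahedral_wrtD_scaled:
  fixes N :: "'v::real_vector \<Rightarrow> real"
  assumes W: "weakly_octahedral_wrt N" and hom: "\<And>t z. N (t *\<^sub>R z) = \<bar>t\<bar> * N z"
    and F: "finite F" and f: "linear f" "\<forall>z. \<bar>f z\<bar> \<le> N z" and \<epsilon>: "0 < \<epsilon>"
  obtains w where "N w = 1"
    "\<And>z t. z \<in> span F \<Longrightarrow> 0 \<le> t \<Longrightarrow> (1 - \<epsilon>) * (\<bar>f z\<bar> + t) \<le> N (z + t *\<^sub>R w)"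
proof -
  have "subspace (span F) \<and> (\<exists>F'. finite F' \<and> span F = span F') \<and> linear f
      \<and> (\<forall>z. \<bar>f z\<bar> \<le> N z) \<and> 0 < \<epsilon>"
    using F f \<epsilon> subspace_span by blast
  then obtain w where w: "N w = 1" "\<forall>z\<in>span F. (1 - \<epsilon>) * (\<bar>f z\<bar> + N w) \<le> N (z + w)"
    using W unfolding weakly_octahedral_wrt_def by blast
  have "(1 - \<epsilon>) * (\<bar>f z\<bar> + t) \<le> N (z + t *\<^sub>R w)" if z: "z \<in> span F" and t: "0 \<le> t" for z t
  proof (cases "t = 0")
    case True
    have "(1 - \<epsilon>) * \<bar>f z\<bar> \<le> \<bar>f z\<bar>"
      using \<epsilon> mult_nonneg_nonneg[of \<epsilon> "\<bar>f z\<bar>"] by (simp add: algebra_simps)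
    then show ?thesis
      using True f(2) order_trans by auto
  next
    case False
    then have t: "0 < t" using t by simp
    have "f (z /\<^sub>R t) = f z / t"
      using linear_scale[OF f(1)] by (simp add: divide_inverse_commute)
    moreover have "(1 - \<epsilon>) * (\<bar>f (z /\<^sub>R t)\<bar> + 1) \<le> N (z /\<^sub>R t + w)"
      using w z span_scale by metis
    ultimately have scaled: "(1 - \<epsilon>) * (\<bar>f z\<bar> / t + 1) \<le> N (z /\<^sub>R t + w)"
      using t by simp
    have "(1 - \<epsilon>) * (\<bar>f z\<bar> + t) = t * ((1 - \<epsilon>) * (\<bar>f z\<bar> / t + 1))"
      using t by (simp add: field_simps)
    also have "\<dots> \<le> t * N (z /\<^sub>R t + w)"
      using scaled t by simp
    also have "\<dots> = N (z + t *\<^sub>R w)"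
      using hom[of t "z /\<^sub>R t + w"] t by (simp add: scaleR_add_right)
    finally show ?thesis .
  qed
  then show thesis
    using that w(1) by blast
qed

lemma weakly_octahedral_normI:
  assumes nontrivial: "\<exists>x::'a::real_normed_vector. x \<noteq> 0"
    and H: "\<And>F g \<epsilon>. finite (F :: 'a set) \<Longrightarrow> linear g \<Longrightarrow> \<forall>x. \<bar>g x\<bar> \<le> norm x \<Longrightarrow>
      \<forall>\<eta>>0. \<exists>x. norm x = 1 \<and> 1 - \<eta> < g x \<Longrightarrow> 0 < \<epsilon> \<Longrightarrow> \<epsilon> < 1 \<Longrightarrow>
      \<exists>w::'a. norm w = 1 \<and> (\<forall>z\<in>span F. (1 - \<epsilon>) * (\<bar>g z\<bar> + 1) \<le> norm (z + w))"
  shows "weakly_octahedral_wrt (norm :: 'a \<Rightarrow> real)"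
proof (rule weakly_octahedral_wrtI)
  fix F :: "'a set" and f and \<epsilon> :: real
  assume F: "finite F" and f: "linear f" "\<forall>z. \<bar>f z\<bar> \<le> norm (z::'a)" and \<epsilon>: "0 < \<epsilon>" "\<epsilon> < 1"
  obtain g where g: "linear g" "\<And>x. \<bar>g x\<bar> \<le> norm x"
    "\<And>\<eta>. 0 < \<eta> \<Longrightarrow> \<exists>x. norm x = 1 \<and> 1 - \<eta> < g x" and fg: "\<And>x. \<bar>f x\<bar> \<le> \<bar>g x\<bar>"
    using exists_norm_one_majorant[OF nontrivial f(1)] f(2) by metis
  obtain w where w: "norm w = 1" "\<forall>z\<in>span F. (1 - \<epsilon>) * (\<bar>g z\<bar> + 1) \<le> norm (z + w)"
    using H[OF F g(1)] g(2,3) \<epsilon> by blast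
  have "(1 - \<epsilon>) * (\<bar>f z\<bar> + norm w) \<le> (1 - \<epsilon>) * (\<bar>g z\<bar> + 1)" for z
    using fg[of z] w(1) \<epsilon> by (intro mult_left_mono) auto
  then show "\<exists>w. norm w = 1 \<and> (\<forall>z\<in>span F. (1 - \<epsilon>) * (\<bar>f z\<bar> + norm w) \<le> norm (z + w))"
    using w order_trans by blast
qed

section \<open>\<open>\<ell>\<^sub>p\<close>-sums\<close>

lemma psum_norm_scaleR: "1 \<le> p \<Longrightarrow> psum_norm p (t *\<^sub>R z) = \<bar>t\<bar> * psum_norm p z"
  by (simp add: psum_norm_eq_lp_norm2 lp_norm2_scale[symmetric])

lemma psum_norm_ge_fst: "1 \<le> p \<Longrightarrow> norm (fst z) \<le> psum_norm p z"
  by (simp add: psum_norm_eq_lp_norm2 lp_norm2_ge_left)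

lemma psum_norm_ge_snd: "1 \<le> p \<Longrightarrow> norm (snd z) \<le> psum_norm p z"
  by (simp add: psum_norm_eq_lp_norm2 lp_norm2_ge_right)

lemma psum_norm_Pair_zero: "1 \<le> p \<Longrightarrow> psum_norm p (x, 0) = norm x"
  by (simp add: psum_norm_eq_lp_norm2 lp_norm2_zero_right)

lemma psum_norm_zero_Pair: "1 \<le> p \<Longrightarrow> psum_norm p (0, y) = norm y"
  by (simp add: psum_norm_eq_lp_norm2 lp_norm2_zero_left)

lemma linear_split_Pair:
  assumes "linear f"
  shows "f z = f (fst z, 0) + f (0, snd z)"
proof -
  have "z = (fst z, 0) + (0, snd z)" by simp
  then show ?thesis
    using linear_add[OF assms] by metis
qed

lemma linear_Pair_zero:
  assumes "linear f"
  shows "linear (\<lambda>x. f (x, 0))" "linear (\<lambda>y. f (0, y))"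
  using assms by (auto intro!: linearI simp: linear_add[symmetric] linear_scale[symmetric])

lemma psum_dual_restrict_bound:
  assumes "1 \<le> p" "\<forall>z. \<bar>f z\<bar> \<le> psum_norm p z"
  shows "\<bar>f (x, 0)\<bar> \<le> norm x" "\<bar>f (0, y)\<bar> \<le> norm y"
  using assms psum_norm_Pair_zero[OF assms(1), of x] psum_norm_zero_Pair[OF assms(1), of y] by metis+

lemma psum_dual_onorm_bound:
  fixes f :: "'a::real_normed_vector \<times> 'b::real_normed_vector \<Rightarrow> real"
  assumes p: "1 \<le> p" and f: "linear f" "\<forall>z. \<bar>f z\<bar> \<le> psum_norm p z"
    and nontrivial: "\<exists>x::'a. x \<noteq> 0" "\<exists>y::'b. y \<noteq> 0" and ab: "0 \<le> a" "0 \<le> b"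
  shows "onorm (\<lambda>x. f (x, 0)) * a + onorm (\<lambda>y. f (0, y)) * b \<le> lp_norm2 p a b"
proof (rule field_le_epsilon)
  fix e :: real
  assume e: "0 < e"
  define \<eta> where "\<eta> = e / (a + b + 1)"
  have \<eta>: "0 < \<eta>" "\<eta> * (a + b) \<le> e"
    using e ab by (auto simp: \<eta>_def field_simps)
  note lin = linear_Pair_zero[OF f(1)] and bound = psum_dual_restrict_bound[OF p f(2)]
  obtain x where x: "norm x = 1" "onorm (\<lambda>x. f (x, 0)) - \<eta> < f (x, 0)"
    using onorm_almost_attained[OF bounded_linear_if_norm_dominated[OF lin(1) bound(1)]
        nontrivial(1) \<eta>(1)] by blast
  obtain y where y: "norm y = 1" "onorm (\<lambda>y. f (0, y)) - \<eta> < f (0, y)"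
    using onorm_almost_attained[OF bounded_linear_if_norm_dominated[OF lin(2) bound(2)]
        nontrivial(2) \<eta>(1)] by blast
  have "onorm (\<lambda>x. f (x, 0)) * a \<le> (f (x, 0) + \<eta>) * a"
    "onorm (\<lambda>y. f (0, y)) * b \<le> (f (0, y) + \<eta>) * b"
    using x(2) y(2) ab by (intro mult_right_mono; simp)+
  then have "onorm (\<lambda>x. f (x, 0)) * a + onorm (\<lambda>y. f (0, y)) * b
      \<le> a * f (x, 0) + b * f (0, y) + \<eta> * (a + b)"
    by (simp add: algebra_simps)
  also have "a * f (x, 0) + b * f (0, y) = f (a *\<^sub>R x, b *\<^sub>R y)"
    using linear_split_Pair[OF f(1), of "(a *\<^sub>R x, b *\<^sub>R y)"] linear_scale[OF lin(1)]
      linear_scale[OF lin(2)] by simp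
  also have "\<dots> \<le> psum_norm p (a *\<^sub>R x, b *\<^sub>R y)"
    using f(2) abs_ge_self order_trans by blast
  also have "\<dots> = lp_norm2 p a b"
    using x(1) y(1) ab by (simp add: psum_norm_eq_lp_norm2)
  finally show "onorm (\<lambda>x. f (x, 0)) * a + onorm (\<lambda>y. f (0, y)) * b \<le> lp_norm2 p a b + e"
    using \<eta>(2) by linarith
qed

lemma fst_in_span_image: "z \<in> span F \<Longrightarrow> fst z \<in> span (fst ` F)"
  using span_linear_image[OF linear_fst] by blast

lemma snd_in_span_image: "z \<in> span F \<Longrightarrow> snd z \<in> span (snd ` F)"
  using span_linear_image[OF linear_snd] by blast

theorem weakly_octahedral_psum_one:
  assumes X: "weakly_octahedral_wrt (norm :: 'a::real_normed_vector \<Rightarrow> real)"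
  shows "weakly_octahedral_wrt (psum_norm 1 :: 'a \<times> 'b::real_normed_vector \<Rightarrow> real)"
proof (rule weakly_octahedral_wrtI)
  fix F :: "('a \<times> 'b) set" and f :: "'a \<times> 'b \<Rightarrow> real" and \<epsilon> :: real
  assume F: "finite F" and f: "linear f" "\<forall>z. \<bar>f z\<bar> \<le> psum_norm 1 z" and \<epsilon>: "0 < \<epsilon>" "\<epsilon> < 1"
  note bound = psum_dual_restrict_bound[OF order_refl f(2)]
  obtain w where w: "norm w = 1"
    "\<And>x t. x \<in> span (fst ` F) \<Longrightarrow> 0 \<le> t \<Longrightarrow> (1 - \<epsilon>) * (\<bar>f (x, 0)\<bar> + t) \<le> norm (x + t *\<^sub>R w)"
    using weakly_octahedral_wrtD_scaled[OF X norm_scaleR finite_imageI[OF F]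
        linear_Pair_zero(1)[OF f(1)] _ \<epsilon>(1)] bound(1) by blast
  have "(1 - \<epsilon>) * (\<bar>f z\<bar> + 1) \<le> psum_norm 1 (z + (w, 0))" if z: "z \<in> span F" for z
  proof -
    have "\<bar>f z\<bar> \<le> \<bar>f (fst z, 0)\<bar> + \<bar>f (0, snd z)\<bar>"
      using linear_split_Pair[OF f(1), of z] by linarith
    then have "(1 - \<epsilon>) * (\<bar>f z\<bar> + 1) \<le> (1 - \<epsilon>) * (\<bar>f (fst z, 0)\<bar> + \<bar>f (0, snd z)\<bar> + 1)"
      using \<epsilon> by (intro mult_left_mono) auto
    also have "\<dots> \<le> (1 - \<epsilon>) * (\<bar>f (fst z, 0)\<bar> + 1) + \<bar>f (0, snd z)\<bar>"
      using \<epsilon> by (simp add: algebra_simps)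
    also have "\<dots> \<le> norm (fst z + w) + norm (snd z)"
      using w(2)[OF fst_in_span_image[OF z], of 1] bound(2)[of "snd z"] by simp
    also have "\<dots> = psum_norm 1 (z + (w, 0))"
      by (simp add: psum_norm_eq_lp_norm2 lp_norm2_one)
    finally show ?thesis .
  qed
  moreover have "psum_norm 1 (w, 0 :: 'b) = 1"
    using w(1) by (simp add: psum_norm_Pair_zero)
  ultimately show "\<exists>W. psum_norm 1 W = 1 \<and> (\<forall>z\<in>span F. (1 - \<epsilon>) * (\<bar>f z\<bar> + psum_norm 1 W) \<le> psum_norm 1 (z + W))"
    by (intro exI[of _ "(w, 0)"]) auto
qed

lemma psum_functional_decompose:
  fixes f :: "'a::real_normed_vector \<times> 'b::real_normed_vector \<Rightarrow> real"
  assumes p: "1 \<le> p" and f: "linear f" "\<forall>z. \<bar>f z\<bar> \<le> psum_norm p z"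
    and nontrivial: "\<exists>x::'a. x \<noteq> 0" "\<exists>y::'b. y \<noteq> 0"
  obtains G H g h where "0 \<le> G" "0 \<le> H" "linear g" "linear h"
    "\<And>x. \<bar>g x\<bar> \<le> norm x" "\<And>y. \<bar>h y\<bar> \<le> norm y"
    "\<And>z. \<bar>f z\<bar> \<le> G * \<bar>g (fst z)\<bar> + H * \<bar>h (snd z)\<bar>"
    "\<And>a b. 0 \<le> a \<Longrightarrow> 0 \<le> b \<Longrightarrow> G * a + H * b \<le> lp_norm2 p a b"
proof -
  define g h where "g = (\<lambda>x. f (x, 0))" and "h = (\<lambda>y. f (0, y))"
  have lin: "linear g" "linear h" and bound: "\<And>x. \<bar>g x\<bar> \<le> norm x" "\<And>y. \<bar>h y\<bar> \<le> norm y"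
    using linear_Pair_zero[OF f(1)] psum_dual_restrict_bound[OF p f(2)] by (simp_all add: g_def h_def)
  note gn = normalize_functional[OF lin(1) bound(1)]
    and hn = normalize_functional[OF lin(2) bound(2)]
  show thesis
  proof (rule that[OF _ _ gn(2) hn(2) gn(3) hn(3)])
    show "0 \<le> onorm g" "0 \<le> onorm h"
      by (intro onorm_pos_le bounded_linear_if_norm_dominated lin bound)+
    show "\<bar>f z\<bar> \<le> onorm g * \<bar>g (fst z) / onorm g\<bar> + onorm h * \<bar>h (snd z) / onorm h\<bar>" for z
    proof -
      have "f z = g (fst z) + h (snd z)"
        unfolding g_def h_def by (rule linear_split_Pair[OF f(1)])
      then have "\<bar>f z\<bar> \<le> \<bar>g (fst z)\<bar> + \<bar>h (snd z)\<bar>"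
        by (simp add: abs_triangle_ineq)
      then show ?thesis
        using gn(4)[of "fst z"] hn(4)[of "snd z"] by linarith
    qed
    show "onorm g * a + onorm h * b \<le> lp_norm2 p a b" if "0 \<le> a" "0 \<le> b" for a b
      using psum_dual_onorm_bound[OF p f nontrivial that] by (simp add: g_def h_def)
  qed
qed

theorem weakly_octahedral_psum:
  fixes p :: ereal
  assumes p: "1 \<le> p"
    and X: "weakly_octahedral_wrt (norm :: 'a::real_normed_vector \<Rightarrow> real)"
    and Y: "weakly_octahedral_wrt (norm :: 'b::real_normed_vector \<Rightarrow> real)"
    and nontrivial: "\<exists>x::'a. x \<noteq> 0" "\<exists>y::'b. y \<noteq> 0"
  shows "weakly_octahedral_wrt (psum_norm p :: 'a \<times> 'b \<Rightarrow> real)"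
proof (rule weakly_octahedral_wrtI)
  fix F :: "('a \<times> 'b) set" and f :: "'a \<times> 'b \<Rightarrow> real" and \<epsilon> :: real
  assume F: "finite F" and f: "linear f" "\<forall>z. \<bar>f z\<bar> \<le> psum_norm p z" and \<epsilon>: "0 < \<epsilon>" "\<epsilon> < 1"
  obtain G H g h where GH: "0 \<le> G" "0 \<le> H" and gh: "linear g" "linear h"
    "\<And>x. \<bar>g x\<bar> \<le> norm x" "\<And>y. \<bar>h y\<bar> \<le> norm y"
    and split: "\<And>z. \<bar>f z\<bar> \<le> G * \<bar>g (fst z)\<bar> + H * \<bar>h (snd z)\<bar>"
    and dual: "\<And>a b. 0 \<le> a \<Longrightarrow> 0 \<le> b \<Longrightarrow> G * a + H * b \<le> lp_norm2 p a b"
    using psum_functional_decompose[OF p f nontrivial] by blast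
  define \<delta> where "\<delta> = \<epsilon> / 2"
  have \<delta>: "0 < \<delta>" "\<delta> < 1" "1 - \<epsilon> \<le> (1 - \<delta>) * (1 - \<delta>)"
    using \<epsilon> by (auto simp: \<delta>_def algebra_simps)
  obtain \<alpha> \<beta> where \<alpha>\<beta>: "0 \<le> \<alpha>" "0 \<le> \<beta>" "lp_norm2 p \<alpha> \<beta> = 1"
    and near: "\<And>A B. 0 \<le> A \<Longrightarrow> 0 \<le> B \<Longrightarrow>
      (1 - \<delta>) * (G * A + H * B + 1) \<le> lp_norm2 p (A + \<alpha>) (B + \<beta>)"
    using lp_norm2_almost_norming[OF p GH dual \<delta>(1)] by blast
  obtain w1 where w1: "norm w1 = 1" "\<And>x t. x \<in> span (fst ` F) \<Longrightarrow> 0 \<le> t \<Longrightarrow>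
      (1 - \<delta>) * (\<bar>g x\<bar> + t) \<le> norm (x + t *\<^sub>R w1)"
    using weakly_octahedral_wrtD_scaled[OF X norm_scaleR finite_imageI[OF F] gh(1) _ \<delta>(1)] gh(3)
    by blast
  obtain w2 where w2: "norm w2 = 1" "\<And>y t. y \<in> span (snd ` F) \<Longrightarrow> 0 \<le> t \<Longrightarrow>
      (1 - \<delta>) * (\<bar>h y\<bar> + t) \<le> norm (y + t *\<^sub>R w2)"
    using weakly_octahedral_wrtD_scaled[OF Y norm_scaleR finite_imageI[OF F] gh(2) _ \<delta>(1)] gh(4)
    by blast
  define W where "W = (\<alpha> *\<^sub>R w1, \<beta> *\<^sub>R w2)"
  have "(1 - \<epsilon>) * (\<bar>f z\<bar> + 1) \<le> psum_norm p (z + W)" if z: "z \<in> span F" for z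
  proof -
    define A B where "A = \<bar>g (fst z)\<bar>" and "B = \<bar>h (snd z)\<bar>"
    have "(1 - \<epsilon>) * (\<bar>f z\<bar> + 1) \<le> (1 - \<delta>) * ((1 - \<delta>) * (G * A + H * B + 1))"
      using split[of z] \<delta>(3) \<epsilon> GH mult_mono[OF \<delta>(3), of "\<bar>f z\<bar> + 1" "G * A + H * B + 1"]
      by (simp add: A_def B_def mult.assoc)
    also have "\<dots> \<le> (1 - \<delta>) * lp_norm2 p (A + \<alpha>) (B + \<beta>)"
      using near[of A B] \<delta>(2) by (intro mult_left_mono) (auto simp: A_def B_def)
    also have "\<dots> \<le> lp_norm2 p (norm (fst z + \<alpha> *\<^sub>R w1)) (norm (snd z + \<beta> *\<^sub>R w2))"
      using w1(2)[OF fst_in_span_image[OF z]] w2(2)[OF snd_in_span_image[OF z]] \<alpha>\<beta> \<delta>(2)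
      by (intro lp_norm2_scaled_mono[OF p]) (auto simp: A_def B_def)
    also have "\<dots> = psum_norm p (z + W)"
      by (simp add: psum_norm_eq_lp_norm2 W_def)
    finally show ?thesis .
  qed
  moreover have "psum_norm p W = 1"
    using w1(1) w2(1) \<alpha>\<beta> by (simp add: psum_norm_eq_lp_norm2 W_def)
  ultimately show "\<exists>W. psum_norm p W = 1 \<and> (\<forall>z\<in>span F. (1 - \<epsilon>) * (\<bar>f z\<bar> + psum_norm p W) \<le> psum_norm p (z + W))"
    by (intro exI[of _ W]) auto
qed

lemma first_component_lower_bound:
  fixes g :: "'a::real_normed_vector \<Rightarrow> real"
  assumes K: "0 < K"
    and flat: "\<And>A B R. 0 \<le> A \<Longrightarrow> 0 \<le> B \<Longrightarrow> K * B \<le> R \<Longrightarrow> R \<le> lp_norm2 p A B \<Longrightarrow> R - \<rho> * B \<le> A"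
    and \<rho>: "0 \<le> \<rho>" and \<eta>: "0 \<le> \<eta>" "\<eta> \<le> 1/4"
    and g: "linear g" and x0: "norm x0 = 1" "1 - \<eta> < g x0"
    and v: "norm v \<le> 1" and t: "0 < t"
    and lower: "\<And>s. (1 - \<eta>) * (\<bar>g (x + s *\<^sub>R x0)\<bar> + t)
      \<le> lp_norm2 p (norm (x + s *\<^sub>R x0 + t *\<^sub>R u)) (t * norm v)"
  shows "(1 - \<eta>) * (\<bar>g x\<bar> + t) - (4 * \<eta> * K + \<rho>) * t \<le> norm (x + t *\<^sub>R u)"
proof -
  define s where "s = 2 * K * t"
  define \<sigma> where "\<sigma> = (if 0 \<le> g x then s else - s)"
  have s: "0 \<le> s"
    using K t by (simp add: s_def)
  have "0 \<le> s * g x0"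
    using s x0(2) \<eta> by simp
  then have "\<bar>g (x + \<sigma> *\<^sub>R x0)\<bar> = \<bar>g x\<bar> + s * g x0"
    using linear_add[OF g] linear_scale[OF g] by (auto simp: \<sigma>_def)
  then have gx: "\<bar>g x\<bar> + s * (1 - \<eta>) \<le> \<bar>g (x + \<sigma> *\<^sub>R x0)\<bar>"
    using x0(2) s by (simp add: mult_left_mono)
  define R where "R = (1 - \<eta>) * (\<bar>g (x + \<sigma> *\<^sub>R x0)\<bar> + t)"
  have R: "(1 - \<eta>) * (\<bar>g x\<bar> + t) + (1 - \<eta>) * (1 - \<eta>) * s \<le> R"
    using mult_left_mono[OF gx, of "1 - \<eta>"] \<eta> by (simp add: R_def algebra_simps)
  have "K * (t * norm v) \<le> K * t"
    using K t v by (simp add: mult_left_le_one_le)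
  also have "\<dots> \<le> (1 - \<eta>) * (1 - \<eta>) * s"
  proof -
    have "1/2 \<le> (1 - \<eta>) * (1 - \<eta>)"
      using mult_mono[of "3/4" "1 - \<eta>" "3/4" "1 - \<eta>"] \<eta> by simp
    then show ?thesis
      using mult_right_mono[of "1/2" "(1 - \<eta>) * (1 - \<eta>)" s] s by (simp add: s_def)
  qed
  also have "\<dots> \<le> R"
    using R mult_nonneg_nonneg[of "1 - \<eta>" "\<bar>g x\<bar> + t"] \<eta> t by linarith
  finally have "R - \<rho> * (t * norm v) \<le> norm (x + \<sigma> *\<^sub>R x0 + t *\<^sub>R u)"
    using flat lower[of \<sigma>] t by (simp add: R_def)
  moreover have "norm (x + \<sigma> *\<^sub>R x0 + t *\<^sub>R u) \<le> norm (x + t *\<^sub>R u) + norm (\<sigma> *\<^sub>R x0)"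
    using norm_triangle_ineq[of "x + t *\<^sub>R u" "\<sigma> *\<^sub>R x0"] by (simp add: add_ac)
  moreover have "norm (\<sigma> *\<^sub>R x0) = s"
    using x0(1) s by (simp add: \<sigma>_def)
  moreover have "\<rho> * (t * norm v) \<le> \<rho> * t"
    using \<rho> t v by (simp add: mult_left_mono mult_left_le_one_le)
  moreover have "s - 2 * \<eta> * s \<le> (1 - \<eta>) * (1 - \<eta>) * s"
    using s \<eta> by (simp add: algebra_simps)
  moreover have "(4 * \<eta> * K + \<rho>) * t = 2 * \<eta> * s + \<rho> * t"
    by (simp add: s_def algebra_simps)
  ultimately show ?thesis
    using R by linarith
qed

lemma normalize_scaled_witness:
  fixes u :: "'a::real_normed_vector"
  assumes \<epsilon>: "0 < \<epsilon>" "\<epsilon> < 1" and u: "norm u \<le> 1" and E: "0 \<in> E"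
    and lower: "\<And>x t. x \<in> E \<Longrightarrow> 0 < t \<Longrightarrow> (1 - \<epsilon>) * (\<bar>g x\<bar> + t) \<le> norm (x + t *\<^sub>R u)"
  shows "norm (u /\<^sub>R norm u) = 1" "\<And>x. x \<in> E \<Longrightarrow> (1 - \<epsilon>) * (\<bar>g x\<bar> + 1) \<le> norm (x + u /\<^sub>R norm u)"
proof -
  have "1 - \<epsilon> \<le> (1 - \<epsilon>) * (\<bar>g 0\<bar> + 1)"
    using \<epsilon> by simp
  also have "\<dots> \<le> norm u"
    using lower[OF E, of 1] by simp
  finally have u0: "0 < norm u"
    using \<epsilon> by linarith
  then show "norm (u /\<^sub>R norm u) = 1"
    by simp
  fix x
  assume "x \<in> E"
  have "(1 - \<epsilon>) * (\<bar>g x\<bar> + 1) \<le> (1 - \<epsilon>) * (\<bar>g x\<bar> + 1 / norm u)"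
    using \<epsilon> u u0 by (intro mult_left_mono) auto
  also have "\<dots> \<le> norm (x + u /\<^sub>R norm u)"
    using lower[OF \<open>x \<in> E\<close>, of "1 / norm u"] u0 by (simp add: divide_inverse_commute)
  finally show "(1 - \<epsilon>) * (\<bar>g x\<bar> + 1) \<le> norm (x + u /\<^sub>R norm u)" .
qed

lemma linear_Pair_left_zero: "linear (\<lambda>x. (x, 0))"
  by (intro linearI) auto

lemma weakly_octahedral_psum_fst_witness:
  fixes g :: "'a::real_normed_vector \<Rightarrow> real"
  assumes p: "1 \<le> p" and Z: "weakly_octahedral_wrt (psum_norm p :: 'a \<times> 'b \<Rightarrow> real)"
    and F: "finite F" and g: "linear g" "\<forall>x. \<bar>g x\<bar> \<le> norm x" and \<eta>: "0 < \<eta>"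
  obtains u :: 'a and v :: "'b::real_normed_vector" where "norm u \<le> 1" "norm v \<le> 1"
    "\<And>x t. x \<in> span F \<Longrightarrow> 0 \<le> t \<Longrightarrow>
      (1 - \<eta>) * (\<bar>g x\<bar> + t) \<le> lp_norm2 p (norm (x + t *\<^sub>R u)) (t * norm v)"
proof -
  define f where "f z = g (fst z)" for z :: "'a \<times> 'b"
  have "finite ((\<lambda>x. (x, 0::'b)) ` F)"
    using F by simp
  moreover have "linear f"
    using linear_compose[OF linear_fst g(1)] by (simp add: o_def f_def[abs_def])
  moreover have "\<forall>z. \<bar>f z\<bar> \<le> psum_norm p z"
    using g(2) psum_norm_ge_fst[OF p] order_trans by (fastforce simp: f_def)
  ultimately obtain W where W: "psum_norm p W = 1"
    "\<And>z t. z \<in> span ((\<lambda>x. (x, 0::'b)) ` F) \<Longrightarrow> 0 \<le> t \<Longrightarrow>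
      (1 - \<eta>) * (\<bar>f z\<bar> + t) \<le> psum_norm p (z + t *\<^sub>R W)"
    using weakly_octahedral_wrtD_scaled[OF Z psum_norm_scaleR[OF p] _ _ _ \<eta>] by blast
  show thesis
  proof (rule that[of "fst W" "snd W"])
    show "norm (fst W) \<le> 1" "norm (snd W) \<le> 1"
      using psum_norm_ge_fst[OF p, of W] psum_norm_ge_snd[OF p, of W] W(1) by simp_all
    fix x and t :: real
    assume "x \<in> span F" "0 \<le> t"
    then have "(x, 0) \<in> span ((\<lambda>x. (x, 0::'b)) ` F)"
      unfolding span_linear_image[OF linear_Pair_left_zero] by blast
    then show "(1 - \<eta>) * (\<bar>g x\<bar> + t) \<le> lp_norm2 p (norm (x + t *\<^sub>R fst W)) (t * norm (snd W))"
      using W(2)[of "(x, 0)" t] \<open>0 \<le> t\<close> by (simp add: psum_norm_eq_lp_norm2 f_def)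
  qed
qed

theorem weakly_octahedral_psum_fst:
  fixes p :: ereal
  assumes p: "1 < p"
    and Z: "weakly_octahedral_wrt (psum_norm p :: 'a::real_normed_vector \<times> 'b::real_normed_vector \<Rightarrow> real)"
    and nontrivial: "\<exists>x::'a. x \<noteq> 0"
  shows "weakly_octahedral_wrt (norm :: 'a \<Rightarrow> real)"
proof (rule weakly_octahedral_normI[OF nontrivial])
  fix F :: "'a set" and g :: "'a \<Rightarrow> real" and \<epsilon> :: real
  assume F: "finite F" and g: "linear g" "\<forall>x. \<bar>g x\<bar> \<le> norm x"
    and norm_one: "\<forall>\<eta>>0. \<exists>x. norm x = 1 \<and> 1 - \<eta> < g x" and \<epsilon>: "0 < \<epsilon>" "\<epsilon> < 1"
  obtain K where K: "0 < K" and flat: "\<And>A B R. 0 \<le> A \<Longrightarrow> 0 \<le> B \<Longrightarrow> K * B \<le> R \<Longrightarrow>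
      R \<le> lp_norm2 p A B \<Longrightarrow> R - \<epsilon> / 2 * B \<le> A"
    using lp_norm2_almost_first[OF p, of "\<epsilon> / 2"] \<epsilon> by auto
  define \<eta> where "\<eta> = min (1/4) (\<epsilon> / (2 * (1 + 4 * K)))"
  have "\<eta> \<le> \<epsilon> / (2 * (1 + 4 * K))"
    by (simp add: \<eta>_def)
  then have "\<eta> * (2 * (1 + 4 * K)) \<le> \<epsilon>"
    using K by (simp add: pos_le_divide_eq)
  then have "\<eta> * (1 + 4 * K) \<le> \<epsilon> / 2"
    by (simp add: algebra_simps)
  moreover have "0 < \<eta>" "\<eta> \<le> 1/4"
    unfolding \<eta>_def using \<epsilon> K by (simp, linarith)
  ultimately have \<eta>: "0 < \<eta>" "\<eta> \<le> 1/4" "\<eta> * (1 + 4 * K) \<le> \<epsilon> / 2"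
    by simp_all
  obtain x0 where x0: "norm x0 = 1" "1 - \<eta> < g x0"
    using norm_one \<eta>(1) by blast
  obtain u :: 'a and v :: 'b where u: "norm u \<le> 1" and v: "norm v \<le> 1"
    and W: "\<And>x t. x \<in> span (insert x0 F) \<Longrightarrow> 0 \<le> t \<Longrightarrow>
      (1 - \<eta>) * (\<bar>g x\<bar> + t) \<le> lp_norm2 p (norm (x + t *\<^sub>R u)) (t * norm v)"
    using weakly_octahedral_psum_fst_witness[OF less_imp_le[OF p] Z finite.insertI[OF F] g \<eta>(1)]
    by blast
  have lower: "(1 - \<epsilon>) * (\<bar>g x\<bar> + t) \<le> norm (x + t *\<^sub>R u)" if x: "x \<in> span F" and t: "0 < t" for x t
  proof -
    have "x + s *\<^sub>R x0 \<in> span (insert x0 F)" for s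
      using x span_mono[of F "insert x0 F"] span_base[of x0 "insert x0 F"]
      by (intro span_add span_scale) auto
    then have "(1 - \<eta>) * (\<bar>g x\<bar> + t) - (4 * \<eta> * K + \<epsilon> / 2) * t \<le> norm (x + t *\<^sub>R u)"
      using W t by (intro first_component_lower_bound[OF K flat _ _ \<eta>(2) g(1) x0 v t]) (use \<epsilon> \<eta> in auto)
    moreover have "(4 * \<eta> * K + \<epsilon> / 2) * t \<le> (4 * \<eta> * K + \<epsilon> / 2) * (\<bar>g x\<bar> + t)"
      using \<epsilon> \<eta> K by (intro mult_left_mono) auto
    moreover have "(1 - \<epsilon>) * (\<bar>g x\<bar> + t) \<le> (1 - \<eta> - (4 * \<eta> * K + \<epsilon> / 2)) * (\<bar>g x\<bar> + t)"
      using \<eta>(3) t by (intro mult_right_mono) (auto simp: algebra_simps)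
    moreover have "(1 - \<eta> - (4 * \<eta> * K + \<epsilon> / 2)) * (\<bar>g x\<bar> + t)
        = (1 - \<eta>) * (\<bar>g x\<bar> + t) - (4 * \<eta> * K + \<epsilon> / 2) * (\<bar>g x\<bar> + t)"
      by (rule left_diff_distrib)
    ultimately show ?thesis
      by linarith
  qed
  show "\<exists>w. norm w = 1 \<and> (\<forall>z\<in>span F. (1 - \<epsilon>) * (\<bar>g z\<bar> + 1) \<le> norm (z + w))"
    using normalize_scaled_witness[OF \<epsilon> u span_zero lower] by blast
qed

theorem proposition4p5:
  assumes "\<exists>x::'a::banach. x \<noteq> 0" and "\<exists>y::'b::banach. y \<noteq> 0"
  shows "(weakly_octahedral_wrt (norm :: 'a \<Rightarrow> real) \<longrightarrow>
            weakly_octahedral_wrt (psum_norm 1 :: 'a \<times> 'b \<Rightarrow> real))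
       \<and> (\<forall>p::ereal. 1 < p \<and> weakly_octahedral_wrt (norm :: 'a \<Rightarrow> real)
                      \<and> weakly_octahedral_wrt (norm :: 'b \<Rightarrow> real) \<longrightarrow>
            weakly_octahedral_wrt (psum_norm p :: 'a \<times> 'b \<Rightarrow> real))
       \<and> (\<forall>p::ereal. 1 < p \<and> weakly_octahedral_wrt (psum_norm p :: 'a \<times> 'b \<Rightarrow> real) \<longrightarrow>
            weakly_octahedral_wrt (norm :: 'a \<Rightarrow> real))"
  using weakly_octahedral_psum_one[where 'b = 'b] weakly_octahedral_psum[OF _ _ _ assms]
    weakly_octahedral_psum_fst[OF _ _ assms(1)]
  by (auto simp: less_imp_le)

end
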